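(* Let $A,q,\mu$ be as in the context and write $k=k_0(A,q,\mu)$. (i) Let $\phi,\tilde\phi\in\mathcal{C}^2(\mathbb{R}^N)$ be positive periodic functions satisfying $-\nabla\cdot(A\nabla\phi)-q\cdot\nabla\phi-\mu\phi=k\phi$ and $-\nabla\cdot(A\nabla\tilde\phi)+q\cdot\nabla\tilde\phi-(\mu-\nabla\cdot q)\tilde\phi=k\tilde\phi$, with $\int_C\phi\tilde\phi=1$. Then $\alpha=\sqrt{\phi\tilde\phi}$ and $\beta=\frac12\ln(\phi/\tilde\phi)$ belong to $\mathcal{C}^2(\mathbb{R}^N)$ and satisfy \[-\nabla\cdot (A\nabla\alpha) - \Big(\mu-\frac{\nabla\cdot q}{2}+\nabla\beta A\nabla\beta+q\cdot \nabla\beta\Big)\alpha=k\alpha,\qquad -\nabla\cdot \Big( \alpha^2 \big(A\nabla\beta+\frac{q}{2}\big)\Big)=0,\] with $\alpha>0$ periodic and $\beta$ periodic. (ii) Conversely, if $(\alpha,\beta)\in\mathcal{C}^2(\mathbb{R}^N)\times\mathcal{C}^2(\mathbb{R}^N)$ satisfy the two equations in (i) with $\alpha>0$ periodic and $\beta$ periodic, then $\phi=\alpha e^{\beta}$ and $\tilde\phi=\alpha e^{-\beta}$ are positive periodic functions satisfying the two eigenvalue equations in (i).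
   Context: Let $(\epsilon_i)$ be an orthonormal basis of $\mathbb{R}^N$ and $L_1,\dots,L_N>0$; a function is periodic if it is invariant under $x\mapsto x+L_i\epsilon_i$ for every $i$; $C=\prod_{i=1}^N(0,L_i)$ is the periodicity cell. Let $A$ be a periodic, symmetric matrix field of class $\mathcal{C}^1$, uniformly elliptic ($\gamma|\xi|^2\le\xi A(x)\xi\le\Gamma|\xi|^2$ for some $0<\gamma\le\Gamma$). Let $q$ be a periodic $\mathcal{C}^1$ vector field and $\mu$ a continuous periodic function. $k_0(A,q,\mu)$ is the periodic principal eigenvalue of $\phi\mapsto-\nabla\cdot(A\nabla\phi)-q\cdot\nabla\phi-\mu\phi$, i.e. the unique real $k$ for which there exists a periodic $\phi\in\mathcal{C}^2(\mathbb{R}^N)$, $\phi>0$, with $-\nabla\cdot(A\nabla\phi)-q\cdot\nabla\phi-\mu\phi=k\phi$. *)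

theory Defs
  imports "HOL-Analysis.Analysis"
begin

text \<open>Points of R^N are vectors of type real^'n (N = CARD('n)).
  Partial derivative along the i-th standard coordinate direction.\<close>
definition partial :: "'n::finite \<Rightarrow> (real^'n \<Rightarrow> real) \<Rightarrow> real^'n \<Rightarrow> real" where
  "partial i f x = deriv (\<lambda>t. f (x + t *\<^sub>R axis i 1)) 0"

definition grad :: "(real^'n::finite \<Rightarrow> real) \<Rightarrow> real^'n \<Rightarrow> real^'n" where
  "grad f x = (\<chi> i. partial i f x)"

definition divg :: "(real^'n::finite \<Rightarrow> real^'n) \<Rightarrow> real^'n \<Rightarrow> real" where
  "divg F x = (\<Sum>i\<in>UNIV. partial i (\<lambda>y. F y $ i) x)"

definition C1 :: "(real^'n::finite \<Rightarrow> real) \<Rightarrow> bool" where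
  "C1 f \<longleftrightarrow> (\<forall>x. f differentiable (at x)) \<and> (\<forall>i. continuous_on UNIV (partial i f))"

definition C2 :: "(real^'n::finite \<Rightarrow> real) \<Rightarrow> bool" where
  "C2 f \<longleftrightarrow> C1 f \<and> (\<forall>i. C1 (partial i f))"

definition periodicf :: "('n::finite \<Rightarrow> real^'n) \<Rightarrow> ('n \<Rightarrow> real) \<Rightarrow> (real^'n \<Rightarrow> 'b) \<Rightarrow> bool" where
  "periodicf eps L f \<longleftrightarrow> (\<forall>x i. f (x + L i *\<^sub>R eps i) = f x)"

definition cell :: "('n::finite \<Rightarrow> real^'n) \<Rightarrow> ('n \<Rightarrow> real) \<Rightarrow> (real^'n) set" where
  "cell eps L = {x. \<forall>i. 0 < x \<bullet> eps i \<and> x \<bullet> eps i < L i}"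

definition Lop :: "(real^'n \<Rightarrow> real^'n^'n) \<Rightarrow> (real^'n \<Rightarrow> real^'n) \<Rightarrow> (real^'n \<Rightarrow> real)
    \<Rightarrow> (real^'n::finite \<Rightarrow> real) \<Rightarrow> real^'n \<Rightarrow> real" where
  "Lop A q \<mu> \<phi> x = - divg (\<lambda>y. A y *v grad \<phi> y) x - q x \<bullet> grad \<phi> x - \<mu> x * \<phi> x"

definition k0 :: "('n::finite \<Rightarrow> real^'n) \<Rightarrow> ('n \<Rightarrow> real) \<Rightarrow> (real^'n \<Rightarrow> real^'n^'n)
    \<Rightarrow> (real^'n \<Rightarrow> real^'n) \<Rightarrow> (real^'n \<Rightarrow> real) \<Rightarrow> real" where
  "k0 eps L A q \<mu> = (THE k. \<exists>\<phi>. C2 \<phi> \<and> periodicf eps L \<phi> \<and> (\<forall>x. \<phi> x > 0)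
      \<and> (\<forall>x. Lop A q \<mu> \<phi> x = k * \<phi> x))"

end

theory Submission
  imports Defs
begin

text \<open>Put phi = alpha e^beta and psi = alpha e^(-beta), i.e. alpha = sqrt (phi psi) and
  beta = ln (phi / psi) / 2. The product and chain rules together with the symmetry of A give,
  pointwise,
    L phi - k phi = e^beta (R - div F / alpha)   and   L* psi - k psi = e^(-beta) (R + div F / alpha),
  where L* is the formal adjoint of L, R is the residual of the equation for alpha and
  F = alpha^2 (A grad beta + q / 2). As e^(+-beta) > 0, both eigenvalue equations hold at a point
  iff R = 0 and div F = 0 there.\<close>

lemma partial_has_real_derivative:
  assumes "f differentiable (at x)"
  shows "((\<lambda>t. f (x + t *\<^sub>R axis i 1)) has_real_derivative partial i f x) (at 0)"
proof -
  obtain f' where f': "(f has_derivative f') (at x)"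
    using assms by (auto simp: differentiable_def)
  have "((\<lambda>t. x + t *\<^sub>R axis i 1) has_derivative (\<lambda>t. t *\<^sub>R axis i 1)) (at 0)"
    by (auto intro!: derivative_eq_intros)
  moreover have "(f has_derivative f') (at (x + 0 *\<^sub>R axis i 1))"
    using f' by simp
  ultimately have "((\<lambda>t. f (x + t *\<^sub>R axis i 1)) has_derivative (\<lambda>t. f' (t *\<^sub>R axis i 1))) (at 0)"
    by (rule has_derivative_compose)
  moreover have "(\<lambda>t. f' (t *\<^sub>R axis i 1)) = (*) (f' (axis i 1))"
    using has_derivative_bounded_linear[OF f'] by (auto simp: fun_eq_iff linear_simps)
  ultimately have "((\<lambda>t. f (x + t *\<^sub>R axis i 1)) has_real_derivative f' (axis i 1)) (at 0)"
    by (simp add: has_field_derivative_def)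
  moreover from this have "partial i f x = f' (axis i 1)"
    unfolding partial_def by (rule DERIV_imp_deriv)
  ultimately show ?thesis by simp
qed

lemma partial_eqI:
  "((\<lambda>t. f (x + t *\<^sub>R axis i 1)) has_real_derivative d) (at 0) \<Longrightarrow> partial i f x = d"
  unfolding partial_def by (rule DERIV_imp_deriv)

lemma partial_const: "partial i (\<lambda>y. c) x = 0"
  by (rule partial_eqI) simp

lemma partial_add:
  assumes "f differentiable (at x)" "g differentiable (at x)"
  shows "partial i (\<lambda>y. f y + g y) x = partial i f x + partial i g x"
  by (rule partial_eqI)
    (use DERIV_add[OF partial_has_real_derivative[OF assms(1)] partial_has_real_derivative[OF assms(2)]] in simp)

lemma partial_mult:
  assumes "f differentiable (at x)" "g differentiable (at x)"
  shows "partial i (\<lambda>y. f y * g y) x = partial i f x * g x + f x * partial i g x"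
  by (rule partial_eqI)
    (use DERIV_mult[OF partial_has_real_derivative[OF assms(1)] partial_has_real_derivative[OF assms(2)]]
     in \<open>simp add: mult.commute\<close>)

lemma partial_comp:
  assumes "f differentiable (at x)" "(h has_real_derivative h') (at (f x))"
  shows "partial i (\<lambda>y. h (f y)) x = h' * partial i f x"
proof (rule partial_eqI)
  have "(h has_real_derivative h') (at (f (x + 0 *\<^sub>R axis i 1)))"
    using assms(2) by simp
  from DERIV_chain2[OF this partial_has_real_derivative[OF assms(1)]]
  show "((\<lambda>t. h (f (x + t *\<^sub>R axis i 1))) has_real_derivative h' * partial i f x) (at 0)" .
qed

lemma C1_differentiable: "C1 f \<Longrightarrow> f differentiable (at x)"
  by (simp add: C1_def)

lemma C1_continuous_on: "C1 f \<Longrightarrow> continuous_on UNIV f"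
  by (metis C1_def continuous_at_imp_continuous_on differentiable_imp_continuous_within)

lemma C1_continuous_on_partial: "C1 f \<Longrightarrow> continuous_on UNIV (partial i f)"
  by (simp add: C1_def)

lemma C1_const: "C1 (\<lambda>y. c)"
  by (simp add: C1_def partial_const)

lemma C1_add:
  assumes "C1 f" "C1 g"
  shows "C1 (\<lambda>y. f y + g y)"
proof -
  have "partial i (\<lambda>y. f y + g y) = (\<lambda>y. partial i f y + partial i g y)" for i
    using partial_add C1_differentiable assms by blast
  then show ?thesis
    using assms unfolding C1_def
    by (auto intro!: differentiable_add continuous_intros simp: C1_continuous_on_partial)
qed

lemma C1_mult:
  assumes "C1 f" "C1 g"
  shows "C1 (\<lambda>y. f y * g y)"
proof -
  have "partial i (\<lambda>y. f y * g y) = (\<lambda>y. partial i f y * g y + f y * partial i g y)" for i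
    using partial_mult C1_differentiable assms by blast
  then show ?thesis
    using assms C1_continuous_on[OF assms(1)] C1_continuous_on[OF assms(2)] unfolding C1_def
    by (auto intro!: differentiable_mult continuous_intros)
qed

lemma C1_comp:
  assumes f: "C1 f" and range: "\<And>x. f x \<in> S"
    and h: "\<And>z. z \<in> S \<Longrightarrow> (h has_real_derivative h' z) (at z)" and h': "continuous_on S h'"
  shows "C1 (\<lambda>y. h (f y))"
proof -
  have "partial i (\<lambda>y. h (f y)) = (\<lambda>y. h' (f y) * partial i f y)" for i
    using partial_comp[OF C1_differentiable[OF f] h[OF range]] by auto
  moreover have "(\<lambda>y. h (f y)) differentiable (at x)" for x
    using differentiable_chain_at[OF C1_differentiable[OF f], of h] h[OF range]
    by (auto simp: o_def real_differentiable_def)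
  moreover have "continuous_on UNIV (\<lambda>y. h' (f y))"
    using continuous_on_compose2[OF h' C1_continuous_on[OF f]] range by auto
  ultimately show ?thesis
    using f unfolding C1_def by (auto intro!: continuous_intros simp: C1_continuous_on_partial)
qed

lemma C2_imp_C1: "C2 f \<Longrightarrow> C1 f"
  by (simp add: C2_def)

lemma C2_imp_C1_partial: "C2 f \<Longrightarrow> C1 (partial i f)"
  by (simp add: C2_def)

lemma C2_differentiable: "C2 f \<Longrightarrow> f differentiable (at x)"
  by (simp add: C2_def C1_def)

lemma C2_differentiable_partial: "C2 f \<Longrightarrow> partial i f differentiable (at x)"
  by (simp add: C2_def C1_def)

lemma C2_const: "C2 (\<lambda>y::real^'n::finite. c)"
proof -
  have "partial i (\<lambda>y::real^'n. c) = (\<lambda>_. 0)" for i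
    by (simp add: fun_eq_iff partial_const)
  then show ?thesis
    by (simp add: C2_def C1_const)
qed

lemma C2_add:
  assumes "C2 f" "C2 g"
  shows "C2 (\<lambda>y. f y + g y)"
proof -
  have "partial i (\<lambda>y. f y + g y) = (\<lambda>y. partial i f y + partial i g y)" for i
    using partial_add C2_differentiable assms by blast
  then show ?thesis
    using assms unfolding C2_def by (auto intro!: C1_add)
qed

lemma C2_mult:
  assumes "C2 f" "C2 g"
  shows "C2 (\<lambda>y. f y * g y)"
proof -
  have "partial i (\<lambda>y. f y * g y) = (\<lambda>y. partial i f y * g y + f y * partial i g y)" for i
    using partial_mult C2_differentiable assms by blast
  then show ?thesis
    using assms unfolding C2_def by (auto intro!: C1_mult C1_add)
qed

lemma C2_scale: "C2 f \<Longrightarrow> C2 (\<lambda>y. c * f y)"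
  using C2_mult[OF C2_const] .

lemma C2_diff: "C2 f \<Longrightarrow> C2 g \<Longrightarrow> C2 (\<lambda>y. f y - g y)"
  using C2_add[OF _ C2_scale[of g "-1"], of f] by simp

lemma C2_comp:
  assumes f: "C2 f" and range: "\<And>x. f x \<in> S"
    and h: "\<And>z. z \<in> S \<Longrightarrow> (h has_real_derivative h' z) (at z)"
    and h': "\<And>z. z \<in> S \<Longrightarrow> (h' has_real_derivative h'' z) (at z)"
    and h'': "continuous_on S h''"
  shows "C2 (\<lambda>y. h (f y))"
proof -
  have "continuous_on S h'"
    using h' by (meson DERIV_isCont continuous_at_imp_continuous_on)
  moreover have "partial i (\<lambda>y. h (f y)) = (\<lambda>y. h' (f y) * partial i f y)" for i
    using partial_comp[OF C2_differentiable[OF f] h[OF range]] by auto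
  ultimately show ?thesis
    unfolding C2_def
    using C1_comp[OF C2_imp_C1[OF f] range h] C1_comp[OF C2_imp_C1[OF f] range h' h'']
    by (auto intro!: C1_mult C2_imp_C1_partial f)
qed

lemma C2_exp: "C2 f \<Longrightarrow> C2 (\<lambda>x. exp (f x))"
  by (rule C2_comp[of f UNIV exp exp exp]) (auto intro: DERIV_exp continuous_on_exp continuous_on_id)

lemma C2_ln:
  assumes "C2 f" "\<And>x. f x > 0"
  shows "C2 (\<lambda>x. ln (f x))"
proof (rule C2_comp[of f "{0<..}" ln "\<lambda>z. 1 / z" "\<lambda>z. - 1 / z\<^sup>2"])
  show "((\<lambda>z. 1 / z) has_real_derivative - 1 / z\<^sup>2) (at z)" if "z \<in> {0<..}" for z :: real
    using that by (auto intro!: derivative_eq_intros simp: power2_eq_square field_simps)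
  show "continuous_on {0<..} (\<lambda>z::real. - 1 / z\<^sup>2)"
    by (auto intro!: continuous_intros)
qed (use assms in \<open>auto intro: DERIV_ln_divide\<close>)

lemma grad_component [simp]: "grad f x $ i = partial i f x"
  by (simp add: grad_def)

lemma grad_const: "grad (\<lambda>y. c) x = 0"
  by (simp add: vec_eq_iff partial_const)

lemma divg_add:
  assumes "\<And>i. (\<lambda>y. V y $ i) differentiable (at x)" "\<And>i. (\<lambda>y. W y $ i) differentiable (at x)"
  shows "divg (\<lambda>y. V y + W y) x = divg V x + divg W x"
  unfolding divg_def by (simp add: partial_add assms sum.distrib)

lemma divg_scaleR:
  assumes "c differentiable (at x)" "\<And>i. (\<lambda>y. V y $ i) differentiable (at x)"
  shows "divg (\<lambda>y. c y *\<^sub>R V y) x = c x * divg V x + grad c x \<bullet> V x"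
  unfolding divg_def inner_vec_def by (simp add: partial_mult assms sum.distrib sum_distrib_left)

lemma divg_minus:
  assumes "\<And>i. (\<lambda>y. V y $ i) differentiable (at x)"
  shows "divg (\<lambda>y. - V y) x = - divg V x"
  using divg_scaleR[of "\<lambda>_. -1" x V] assms by (simp add: grad_const)

lemma grad_minus:
  assumes "f differentiable (at x)"
  shows "grad (\<lambda>y. - f y) x = - grad f x"
proof -
  have "(uminus has_real_derivative -1) (at (f x))"
    by (auto intro!: derivative_eq_intros)
  then show ?thesis
    using partial_comp[OF assms] by (simp add: vec_eq_iff)
qed

lemma inner_symmetric_matrix:
  fixes M :: "real^'n::finite^'n"
  assumes "transpose M = M"
  shows "u \<bullet> (M *v w) = w \<bullet> (M *v u)"
proof -
  have "u \<bullet> (M *v w) = (transpose M *v u) \<bullet> w"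
    by (simp flip: dot_lmul_matrix add: transpose_matrix_vector)
  then show ?thesis
    using assms by (simp add: inner_commute)
qed

lemma differentiable_matrix_vector_grad:
  assumes "\<And>i j. C1 (\<lambda>x. A x $ i $ j)" "C2 f"
  shows "(\<lambda>y. (A y *v grad f y) $ i) differentiable (at x)"
  unfolding matrix_vector_mult_def using assms
  by (auto intro!: differentiable_sum differentiable_mult simp: C1_differentiable C2_differentiable_partial)

text \<open>The two equations for \<open>(\<alpha>, \<beta>)\<close> read
  \<open>Lop A (\<lambda>_. 0) (symmetrized_potential A q \<mu> \<beta>) \<alpha> = k \<alpha>\<close> and \<open>divg (flux A q \<alpha> \<beta>) = 0\<close>.\<close>

definition symmetrized_potential ::
    "(real^'n \<Rightarrow> real^'n^'n) \<Rightarrow> (real^'n \<Rightarrow> real^'n) \<Rightarrow> (real^'n \<Rightarrow> real)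
      \<Rightarrow> (real^'n::finite \<Rightarrow> real) \<Rightarrow> real^'n \<Rightarrow> real" where
  "symmetrized_potential A q \<mu> b x =
     \<mu> x - divg q x / 2 + grad b x \<bullet> (A x *v grad b x) + q x \<bullet> grad b x"

definition flux ::
    "(real^'n \<Rightarrow> real^'n^'n) \<Rightarrow> (real^'n \<Rightarrow> real^'n)
      \<Rightarrow> (real^'n::finite \<Rightarrow> real) \<Rightarrow> (real^'n \<Rightarrow> real) \<Rightarrow> real^'n \<Rightarrow> real^'n" where
  "flux A q a b y = (a y)\<^sup>2 *\<^sub>R (A y *v grad b y + (1/2) *\<^sub>R q y)"

lemma grad_mult_exp:
  assumes "C2 a" "C2 b"
  shows "grad (\<lambda>z. a z * exp (b z)) y = exp (b y) *\<^sub>R (grad a y + a y *\<^sub>R grad b y)"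
proof -
  have "partial i (\<lambda>z. exp (b z)) y = exp (b y) * partial i b y" for i
    using partial_comp[OF C2_differentiable[OF assms(2)] DERIV_exp] .
  then show ?thesis
    using partial_mult[OF C2_differentiable[OF assms(1)] C2_differentiable[OF C2_exp[OF assms(2)]]]
    by (simp add: vec_eq_iff algebra_simps)
qed

lemma divg_matrix_grad_mult_exp:
  assumes a: "C2 a" and b: "C2 b" and A: "\<And>i j. C1 (\<lambda>x. A x $ i $ j)"
  shows "divg (\<lambda>y. A y *v grad (\<lambda>z. a z * exp (b z)) y) x
    = exp (b x) * (divg (\<lambda>y. A y *v grad a y) x + a x * divg (\<lambda>y. A y *v grad b y) x
        + grad a x \<bullet> (A x *v grad b x)
        + grad b x \<bullet> (A x *v grad a x) + a x * (grad b x \<bullet> (A x *v grad b x)))"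
proof -
  define Aa where "Aa = (\<lambda>y. A y *v grad a y)"
  define Ab where "Ab = (\<lambda>y. A y *v grad b y)"
  have da: "a differentiable (at x)"
    using a by (rule C2_differentiable)
  have dAa: "(\<lambda>y. Aa y $ i) differentiable (at x)" and dAb: "(\<lambda>y. Ab y $ i) differentiable (at x)" for i
    unfolding Aa_def Ab_def using A a b by (simp_all add: differentiable_matrix_vector_grad)
  have daAb: "(\<lambda>y. (a y *\<^sub>R Ab y) $ i) differentiable (at x)" for i
    using dAb da by (auto intro!: differentiable_mult)
  have "(\<lambda>y. A y *v grad (\<lambda>z. a z * exp (b z)) y) = (\<lambda>y. exp (b y) *\<^sub>R (Aa y + a y *\<^sub>R Ab y))"
    by (simp add: grad_mult_exp[OF a b] Aa_def Ab_def matrix_vector_mult_scaleR matrix_vector_right_distrib)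
  moreover have "grad (\<lambda>y. exp (b y)) x = exp (b x) *\<^sub>R grad b x"
    using grad_mult_exp[OF C2_const[of 1] b] by (simp add: grad_const)
  ultimately have "divg (\<lambda>y. A y *v grad (\<lambda>z. a z * exp (b z)) y) x
      = exp (b x) * divg (\<lambda>y. Aa y + a y *\<^sub>R Ab y) x + exp (b x) * (grad b x \<bullet> (Aa x + a x *\<^sub>R Ab x))"
    using divg_scaleR[of "\<lambda>y. exp (b y)" x "\<lambda>y. Aa y + a y *\<^sub>R Ab y"] dAa daAb
      C2_differentiable[OF C2_exp[OF b]] by (simp add: differentiable_add)
  also have "divg (\<lambda>y. Aa y + a y *\<^sub>R Ab y) x = divg Aa x + (a x * divg Ab x + grad a x \<bullet> Ab x)"
    by (simp add: divg_add[OF dAa daAb] divg_scaleR[OF da dAb])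
  finally show ?thesis
    by (simp add: Aa_def Ab_def inner_add_right algebra_simps)
qed

lemma divg_flux:
  assumes a: "C2 a" and b: "C2 b" and A: "\<And>i j. C1 (\<lambda>x. A x $ i $ j)" and q: "\<And>i. C1 (\<lambda>x. q x $ i)"
  shows "divg (flux A q a b) x
    = (a x)\<^sup>2 * (divg (\<lambda>y. A y *v grad b y) x + divg q x / 2)
      + 2 * a x * (grad a x \<bullet> (A x *v grad b x) + grad a x \<bullet> q x / 2)"
proof -
  define Ab where "Ab = (\<lambda>y. A y *v grad b y)"
  have da: "a differentiable (at x)"
    using a by (rule C2_differentiable)
  have dAb: "(\<lambda>y. Ab y $ i) differentiable (at x)" for i
    unfolding Ab_def using A b by (rule differentiable_matrix_vector_grad)
  have dq: "(\<lambda>y. q y $ i) differentiable (at x)" for i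
    using q by (rule C1_differentiable)
  have dhq: "(\<lambda>y. ((1/2) *\<^sub>R q y) $ i) differentiable (at x)" for i
    using dq by (auto intro!: differentiable_mult)
  have square: "((\<lambda>t. t\<^sup>2) has_real_derivative 2 * a x) (at (a x))"
    by (auto intro!: derivative_eq_intros)
  have "grad (\<lambda>y. (a y)\<^sup>2) x = (2 * a x) *\<^sub>R grad a x"
    using partial_comp[OF da square] by (simp add: vec_eq_iff)
  moreover have "divg (\<lambda>y. Ab y + (1/2) *\<^sub>R q y) x = divg Ab x + divg q x / 2"
    using divg_add[OF dAb dhq] divg_scaleR[of "\<lambda>_. 1/2" x q] dq
    by (simp add: grad_const)
  ultimately show ?thesis
    unfolding flux_def
    using divg_scaleR[of "\<lambda>y. (a y)\<^sup>2" x "\<lambda>y. Ab y + (1/2) *\<^sub>R q y"] da dAb dhq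
    by (simp add: Ab_def differentiable_add differentiable_power inner_add_right algebra_simps)
qed

lemma Lop_mult_exp:
  assumes a: "C2 a" and b: "C2 b" and a_nz: "a x \<noteq> 0"
    and A_sym: "\<And>x. transpose (A x) = A x" and A: "\<And>i j. C1 (\<lambda>x. A x $ i $ j)"
    and q: "\<And>i. C1 (\<lambda>x. q x $ i)"
  shows "Lop A q \<mu> (\<lambda>z. a z * exp (b z)) x
    = exp (b x) * (Lop A (\<lambda>_. 0) (symmetrized_potential A q \<mu> b) a x - divg (flux A q a b) x / a x)"
proof -
  have "grad b x \<bullet> (A x *v grad a x) = grad a x \<bullet> (A x *v grad b x)"
    using A_sym by (rule inner_symmetric_matrix)
  then show ?thesis
    using a_nz
    unfolding Lop_def symmetrized_potential_def divg_matrix_grad_mult_exp[OF a b A] divg_flux[OF a b A q]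
    unfolding grad_mult_exp[OF a b]
    by (simp add: inner_add_right inner_commute field_simps power2_eq_square)
qed

text \<open>\<open>Lop A (- q) (\<mu> - divg q)\<close> is the formal adjoint of \<open>Lop A q \<mu>\<close>, the operator of the
  equation for \<open>\<psi>\<close>; its factorization is that of \<open>Lop_mult_exp\<close> with \<open>q\<close> and \<open>b\<close> negated,
  which leaves the potential unchanged and reverses the flux.\<close>

lemma Lop_adjoint_mult_exp:
  assumes a: "C2 a" and b: "C2 b" and a_nz: "a x \<noteq> 0"
    and A_sym: "\<And>x. transpose (A x) = A x" and A: "\<And>i j. C1 (\<lambda>x. A x $ i $ j)"
    and q: "\<And>i. C1 (\<lambda>x. q x $ i)"
  shows "Lop A (\<lambda>y. - q y) (\<lambda>y. \<mu> y - divg q y) (\<lambda>z. a z * exp (- b z)) x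
    = exp (- b x) * (Lop A (\<lambda>_. 0) (symmetrized_potential A q \<mu> b) a x + divg (flux A q a b) x / a x)"
proof -
  have minus_b: "C2 (\<lambda>y. - b y)"
    using C2_scale[OF b, of "-1"] by simp
  have minus_q: "C1 (\<lambda>x. (- q x) $ i)" for i
    using C1_mult[OF C1_const q, of "-1" i] by simp
  have dq: "(\<lambda>y. q y $ i) differentiable (at x)" for i
    using q by (rule C1_differentiable)
  have grad_minus_b: "grad (\<lambda>y. - b y) y = - grad b y" for y
    using C2_differentiable[OF b] by (rule grad_minus)
  have "Lop A (\<lambda>_. 0) (symmetrized_potential A (\<lambda>y. - q y) (\<lambda>y. \<mu> y - divg q y) (\<lambda>y. - b y)) a x
      = Lop A (\<lambda>_. 0) (symmetrized_potential A q \<mu> b) a x"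
    using divg_minus[OF dq] by (simp add: Lop_def symmetrized_potential_def grad_minus_b vec.neg)
  moreover have "flux A (\<lambda>y. - q y) a (\<lambda>y. - b y) = (\<lambda>y. - flux A q a b y)"
    by (simp add: fun_eq_iff flux_def grad_minus_b vec.neg algebra_simps)
  moreover have dflux: "(\<lambda>y. flux A q a b y $ i) differentiable (at x)" for i
    unfolding flux_def using differentiable_matrix_vector_grad[OF A b] C2_differentiable[OF a] dq
    by (auto intro!: differentiable_mult differentiable_add differentiable_power)
  ultimately show ?thesis
    using Lop_mult_exp[OF a minus_b a_nz A_sym A minus_q, of "\<lambda>y. \<mu> y - divg q y"] divg_minus[OF dflux]
    by (simp add: field_simps)
qed

lemma eigen_pair_iff_alpha_beta:
  assumes a: "C2 a" and b: "C2 b" and a_pos: "a x > 0"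
    and A_sym: "\<And>x. transpose (A x) = A x" and A: "\<And>i j. C1 (\<lambda>x. A x $ i $ j)"
    and q: "\<And>i. C1 (\<lambda>x. q x $ i)"
  shows "Lop A q \<mu> (\<lambda>z. a z * exp (b z)) x = k * (a x * exp (b x))
      \<and> Lop A (\<lambda>y. - q y) (\<lambda>y. \<mu> y - divg q y) (\<lambda>z. a z * exp (- b z)) x = k * (a x * exp (- b x))
    \<longleftrightarrow> Lop A (\<lambda>_. 0) (symmetrized_potential A q \<mu> b) a x = k * a x \<and> divg (flux A q a b) x = 0"
proof -
  have a_nz: "a x \<noteq> 0"
    using a_pos by simp
  define R where "R = Lop A (\<lambda>_. 0) (symmetrized_potential A q \<mu> b) a x - k * a x"
  define F where "F = divg (flux A q a b) x / a x"
  have "Lop A q \<mu> (\<lambda>z. a z * exp (b z)) x = k * (a x * exp (b x))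
      \<longleftrightarrow> exp (b x) * (R + k * a x - F) = exp (b x) * (k * a x)"
    by (simp add: Lop_mult_exp[OF a b a_nz A_sym A q] R_def F_def ac_simps)
  also have "\<dots> \<longleftrightarrow> R = F"
    by simp
  finally have eigen: "Lop A q \<mu> (\<lambda>z. a z * exp (b z)) x = k * (a x * exp (b x)) \<longleftrightarrow> R = F" .
  have "Lop A (\<lambda>y. - q y) (\<lambda>y. \<mu> y - divg q y) (\<lambda>z. a z * exp (- b z)) x = k * (a x * exp (- b x))
      \<longleftrightarrow> exp (- b x) * (R + k * a x + F) = exp (- b x) * (k * a x)"
    by (simp add: Lop_adjoint_mult_exp[OF a b a_nz A_sym A q] R_def F_def ac_simps)
  also have "\<dots> \<longleftrightarrow> R = - F"
    by auto
  finally have adjoint_eigen: "Lop A (\<lambda>y. - q y) (\<lambda>y. \<mu> y - divg q y) (\<lambda>z. a z * exp (- b z)) x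
      = k * (a x * exp (- b x)) \<longleftrightarrow> R = - F" .
  have "F = 0 \<longleftrightarrow> divg (flux A q a b) x = 0"
    using a_nz by (simp add: F_def)
  with eigen adjoint_eigen show ?thesis
    unfolding R_def by linarith
qed

lemma sqrt_eq_exp_ln: "0 < y \<Longrightarrow> sqrt y = exp (ln y / 2)"
  by (intro real_sqrt_unique) (auto simp: power2_eq_square simp flip: exp_add)

lemma alpha_beta_of_eigenfunctions:
  assumes A_sym: "\<And>x. transpose (A x) = A x" and A: "\<And>i j. C1 (\<lambda>x. A x $ i $ j)"
    and q: "\<And>i. C1 (\<lambda>x. q x $ i)"
    and \<phi>: "C2 \<phi>" "\<And>x. \<phi> x > 0" "periodicf eps L \<phi>" "\<And>x. Lop A q \<mu> \<phi> x = k * \<phi> x"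
    and \<psi>: "C2 \<psi>" "\<And>x. \<psi> x > 0" "periodicf eps L \<psi>"
      "\<And>x. Lop A (\<lambda>y. - q y) (\<lambda>y. \<mu> y - divg q y) \<psi> x = k * \<psi> x"
  defines "\<alpha> \<equiv> \<lambda>x. sqrt (\<phi> x * \<psi> x)" and "\<beta> \<equiv> \<lambda>x. ln (\<phi> x / \<psi> x) / 2"
  shows "C2 \<alpha> \<and> C2 \<beta> \<and> (\<forall>x. \<alpha> x > 0) \<and> periodicf eps L \<alpha> \<and> periodicf eps L \<beta>
    \<and> (\<forall>x. Lop A (\<lambda>_. 0) (symmetrized_potential A q \<mu> \<beta>) \<alpha> x = k * \<alpha> x)
    \<and> (\<forall>x. divg (flux A q \<alpha> \<beta>) x = 0)"
proof -
  have \<alpha>_exp: "\<alpha> = (\<lambda>x. exp ((ln (\<phi> x) + ln (\<psi> x)) / 2))"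
    using \<phi>(2) \<psi>(2) by (simp add: \<alpha>_def fun_eq_iff sqrt_eq_exp_ln ln_mult less_imp_neq[symmetric])
  have \<beta>_ln: "\<beta> = (\<lambda>x. (ln (\<phi> x) - ln (\<psi> x)) / 2)"
    using \<phi>(2) \<psi>(2) by (simp add: \<beta>_def fun_eq_iff ln_div less_imp_neq[symmetric])
  have \<alpha>_C2: "C2 \<alpha>"
    unfolding \<alpha>_exp using \<phi> \<psi> by (intro C2_exp C2_scale[of _ "1/2", simplified] C2_add C2_ln)
  have \<beta>_C2: "C2 \<beta>"
    unfolding \<beta>_ln using \<phi> \<psi> by (intro C2_scale[of _ "1/2", simplified] C2_diff C2_ln)
  have \<alpha>_pos: "\<alpha> x > 0" for x
    unfolding \<alpha>_exp by simp
  have "\<phi> = (\<lambda>x. \<alpha> x * exp (\<beta> x))" and "\<psi> = (\<lambda>x. \<alpha> x * exp (- \<beta> x))"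
    using \<phi>(2) \<psi>(2) by (simp_all add: \<alpha>_exp \<beta>_ln fun_eq_iff field_simps flip: exp_add)
  then have "Lop A (\<lambda>_. 0) (symmetrized_potential A q \<mu> \<beta>) \<alpha> x = k * \<alpha> x \<and> divg (flux A q \<alpha> \<beta>) x = 0" for x
    using eigen_pair_iff_alpha_beta[OF \<alpha>_C2 \<beta>_C2 \<alpha>_pos A_sym A q] \<phi>(4) \<psi>(4) by metis
  moreover have "periodicf eps L \<alpha>" "periodicf eps L \<beta>"
    using \<phi>(3) \<psi>(3) by (simp_all add: \<alpha>_def \<beta>_def periodicf_def)
  ultimately show ?thesis
    using \<alpha>_C2 \<beta>_C2 \<alpha>_pos by blast
qed

lemma eigenfunctions_of_alpha_beta:
  assumes A_sym: "\<And>x. transpose (A x) = A x" and A: "\<And>i j. C1 (\<lambda>x. A x $ i $ j)"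
    and q: "\<And>i. C1 (\<lambda>x. q x $ i)"
    and \<alpha>: "C2 \<alpha>" "\<And>x. \<alpha> x > 0" "periodicf eps L \<alpha>"
      "\<And>x. Lop A (\<lambda>_. 0) (symmetrized_potential A q \<mu> \<beta>) \<alpha> x = k * \<alpha> x"
    and \<beta>: "C2 \<beta>" "periodicf eps L \<beta>" "\<And>x. divg (flux A q \<alpha> \<beta>) x = 0"
  defines "\<phi> \<equiv> \<lambda>x. \<alpha> x * exp (\<beta> x)" and "\<psi> \<equiv> \<lambda>x. \<alpha> x * exp (- \<beta> x)"
  shows "C2 \<phi> \<and> C2 \<psi> \<and> (\<forall>x. \<phi> x > 0) \<and> (\<forall>x. \<psi> x > 0) \<and> periodicf eps L \<phi> \<and> periodicf eps L \<psi>
    \<and> (\<forall>x. Lop A q \<mu> \<phi> x = k * \<phi> x)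
    \<and> (\<forall>x. Lop A (\<lambda>y. - q y) (\<lambda>y. \<mu> y - divg q y) \<psi> x = k * \<psi> x)"
proof -
  have "C2 \<phi>" "C2 \<psi>"
    using \<alpha>(1) \<beta>(1) unfolding \<phi>_def \<psi>_def
    by (auto intro!: C2_mult C2_exp C2_scale[of _ "-1", simplified])
  moreover have "periodicf eps L \<phi>" "periodicf eps L \<psi>"
    using \<alpha>(3) \<beta>(2) by (simp_all add: \<phi>_def \<psi>_def periodicf_def)
  moreover have "Lop A q \<mu> \<phi> x = k * \<phi> x \<and> Lop A (\<lambda>y. - q y) (\<lambda>y. \<mu> y - divg q y) \<psi> x = k * \<psi> x" for x
    unfolding \<phi>_def \<psi>_def using eigen_pair_iff_alpha_beta[OF \<alpha>(1) \<beta>(1) \<alpha>(2) A_sym A q] \<alpha>(4) \<beta>(3)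
    by blast
  ultimately show ?thesis
    using \<alpha>(2) by (simp add: \<phi>_def \<psi>_def)
qed

text \<open>The correspondence is pointwise and holds for every real \<open>k\<close>.\<close>

theorem proposition2p6:
  fixes eps :: "'n::finite \<Rightarrow> real^'n" and L :: "'n \<Rightarrow> real"
    and A :: "real^'n \<Rightarrow> real^'n^'n" and q :: "real^'n \<Rightarrow> real^'n" and \<mu> :: "real^'n \<Rightarrow> real"
    and \<gamma> \<Gamma> k :: real
  assumes orth: "\<And>i j. eps i \<bullet> eps j = (if i = j then 1 else 0)"
    and Lpos: "\<And>i. L i > 0"
    and A_per: "periodicf eps L A"
    and A_sym: "\<And>x. transpose (A x) = A x"
    and A_C1: "\<And>i j. C1 (\<lambda>x. A x $ i $ j)"
    and ell: "0 < \<gamma>" "\<gamma> \<le> \<Gamma>"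
    and A_ell: "\<And>x \<xi>. \<gamma> * norm \<xi> ^ 2 \<le> \<xi> \<bullet> (A x *v \<xi>) \<and> \<xi> \<bullet> (A x *v \<xi>) \<le> \<Gamma> * norm \<xi> ^ 2"
    and q_per: "periodicf eps L q"
    and q_C1: "\<And>i. C1 (\<lambda>x. q x $ i)"
    and mu_per: "periodicf eps L \<mu>"
    and mu_cont: "continuous_on UNIV \<mu>"
    and k_def: "k = k0 eps L A q \<mu>"
  shows
   "(\<forall>\<phi> \<psi>. C2 \<phi> \<and> C2 \<psi> \<and> (\<forall>x. \<phi> x > 0) \<and> (\<forall>x. \<psi> x > 0)
        \<and> periodicf eps L \<phi> \<and> periodicf eps L \<psi>
        \<and> (\<forall>x. - divg (\<lambda>y. A y *v grad \<phi> y) x - q x \<bullet> grad \<phi> x - \<mu> x * \<phi> x = k * \<phi> x)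
        \<and> (\<forall>x. - divg (\<lambda>y. A y *v grad \<psi> y) x + q x \<bullet> grad \<psi> x - (\<mu> x - divg q x) * \<psi> x = k * \<psi> x)
        \<and> integral (cell eps L) (\<lambda>x. \<phi> x * \<psi> x) = 1
      \<longrightarrow> (let \<alpha> = (\<lambda>x. sqrt (\<phi> x * \<psi> x)); \<beta> = (\<lambda>x. ln (\<phi> x / \<psi> x) / 2) in
            C2 \<alpha> \<and> C2 \<beta>
          \<and> (\<forall>x. - divg (\<lambda>y. A y *v grad \<alpha> y) x
                  - (\<mu> x - divg q x / 2 + grad \<beta> x \<bullet> (A x *v grad \<beta> x) + q x \<bullet> grad \<beta> x) * \<alpha> x
                 = k * \<alpha> x)
          \<and> (\<forall>x. - divg (\<lambda>y. (\<alpha> y)\<^sup>2 *\<^sub>R (A y *v grad \<beta> y + (1/2) *\<^sub>R q y)) x = 0)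
          \<and> (\<forall>x. \<alpha> x > 0) \<and> periodicf eps L \<alpha> \<and> periodicf eps L \<beta>))
  \<and> (\<forall>\<alpha> \<beta>. C2 \<alpha> \<and> C2 \<beta> \<and> (\<forall>x. \<alpha> x > 0) \<and> periodicf eps L \<alpha> \<and> periodicf eps L \<beta>
          \<and> (\<forall>x. - divg (\<lambda>y. A y *v grad \<alpha> y) x
                  - (\<mu> x - divg q x / 2 + grad \<beta> x \<bullet> (A x *v grad \<beta> x) + q x \<bullet> grad \<beta> x) * \<alpha> x
                 = k * \<alpha> x)
          \<and> (\<forall>x. - divg (\<lambda>y. (\<alpha> y)\<^sup>2 *\<^sub>R (A y *v grad \<beta> y + (1/2) *\<^sub>R q y)) x = 0)
      \<longrightarrow> (let \<phi> = (\<lambda>x. \<alpha> x * exp (\<beta> x)); \<psi> = (\<lambda>x. \<alpha> x * exp (- \<beta> x)) in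
            C2 \<phi> \<and> C2 \<psi> \<and> (\<forall>x. \<phi> x > 0) \<and> (\<forall>x. \<psi> x > 0)
          \<and> periodicf eps L \<phi> \<and> periodicf eps L \<psi>
          \<and> (\<forall>x. - divg (\<lambda>y. A y *v grad \<phi> y) x - q x \<bullet> grad \<phi> x - \<mu> x * \<phi> x = k * \<phi> x)
          \<and> (\<forall>x. - divg (\<lambda>y. A y *v grad \<psi> y) x + q x \<bullet> grad \<psi> x - (\<mu> x - divg q x) * \<psi> x = k * \<psi> x)))"
proof -
  have eigen: "Lop A q \<mu> \<phi> x = - divg (\<lambda>y. A y *v grad \<phi> y) x - q x \<bullet> grad \<phi> x - \<mu> x * \<phi> x"
    for \<phi> x by (simp add: Lop_def)
  have adjoint_eigen: "Lop A (\<lambda>y. - q y) (\<lambda>y. \<mu> y - divg q y) \<psi> x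
      = - divg (\<lambda>y. A y *v grad \<psi> y) x + q x \<bullet> grad \<psi> x - (\<mu> x - divg q x) * \<psi> x"
    for \<psi> x by (simp add: Lop_def)
  have alpha_eigen: "Lop A (\<lambda>_. 0) (symmetrized_potential A q \<mu> \<beta>) \<alpha> x
      = - divg (\<lambda>y. A y *v grad \<alpha> y) x
        - (\<mu> x - divg q x / 2 + grad \<beta> x \<bullet> (A x *v grad \<beta> x) + q x \<bullet> grad \<beta> x) * \<alpha> x"
    for \<alpha> \<beta> x by (simp add: Lop_def symmetrized_potential_def)
  have flux_free: "divg (flux A q \<alpha> \<beta>) x = 0
      \<longleftrightarrow> - divg (\<lambda>y. (\<alpha> y)\<^sup>2 *\<^sub>R (A y *v grad \<beta> y + (1/2) *\<^sub>R q y)) x = 0"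
    for \<alpha> \<beta> x by (simp add: flux_def [abs_def])
  show ?thesis
    using alpha_beta_of_eigenfunctions[OF A_sym A_C1 q_C1, where \<mu> = \<mu> and k = k]
      eigenfunctions_of_alpha_beta[OF A_sym A_C1 q_C1, where \<mu> = \<mu> and k = k]
    unfolding Let_def eigen adjoint_eigen alpha_eigen flux_free by blast
qed

end
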